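(* Let $w$ be a weight on $\mathbb{T}$ with $w>0$ a.e. and $w,w^{-1}\in BMO(\mathbb{T})$, let $n\ge1$ and write $\Phi_n^*=\Phi_n^*(z,w)$. Then for every $j=1,2,\dots$, \[ w^jP_{[1,n]}\Phi_n^*=\sum_{l=1}^{j}\binom{j-1}{l-1}{\bf C}_l\, w^{j-l}\Phi_n^* \] and \[ w^{-j}P_{[1,n]}\Phi_n^*=-\sum_{l=0}^{j}\binom{j}{l}\widetilde{\bf C}_{l+1}\, w^{-(j-l)}(w\Phi_n^* ). \]
   Context: $P_{[i,j]}$ denotes the orthogonal projection in $L^2(\mathbb{T},d\theta)$ onto the span of $e^{ik\theta}$, $i\le k\le j$. A function is identified with the operator of multiplication by it, and $[A,B]=AB-BA$. Define ${\bf C}_0=P_{[1,n]}$, ${\bf C}_l=[w,{\bf C}_{l-1}]$ for $l\ge1$, and $\widetilde{\bf C}_0=P_{[1,n]}$, $\widetilde{\bf C}_l=[w^{-1},\widetilde{\bf C}_{l-1}]$ for $l\ge1$. $\Phi_n(z,w)$ is the monic degree-$n$ polynomial orthogonal in $L^2(w\,d\theta)$ to lower-degree polynomials, and for $Q_n(z)=q_nz^n+\dots+q_0$, $Q_n^*(z)=\bar q_0z^n+\dots+\bar q_n$. *)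

theory Defs
  imports "HOL-Analysis.Analysis" "HOL-Computational_Algebra.Polynomial"
begin

text \<open>Functions on the unit circle T are represented as 2pi-periodic functions
  real => complex (variable theta), with the measure d theta.\<close>

type_synonym cfun = "real \<Rightarrow> complex"

definition fourier_coeff :: "cfun \<Rightarrow> int \<Rightarrow> complex" where
  "fourier_coeff f k = (LINT t:{0..2*pi}|lborel. f t * cis (- (of_int k * t))) / (2 * pi)"

definition proj :: "int \<Rightarrow> int \<Rightarrow> cfun \<Rightarrow> cfun" where
  "proj i j f = (\<lambda>t. \<Sum>k\<in>{i..j}. fourier_coeff f k * cis (of_int k * t))"

definition mult_op :: "cfun \<Rightarrow> cfun \<Rightarrow> cfun" where
  "mult_op g f = (\<lambda>t. g t * f t)"

fun Cop :: "cfun \<Rightarrow> nat \<Rightarrow> nat \<Rightarrow> cfun \<Rightarrow> cfun" where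
  "Cop g 0 n = proj 1 (int n)"
| "Cop g (Suc l) n = (\<lambda>f t. mult_op g (Cop g l n f) t - Cop g l n (mult_op g f) t)"

definition bmo_T :: "(real \<Rightarrow> real) \<Rightarrow> bool" where
  "bmo_T f \<longleftrightarrow> (\<forall>a b. a < b \<longrightarrow> set_integrable lborel {a..b} f) \<and>
     (\<exists>M. \<forall>a b. a < b \<and> b - a \<le> 2 * pi \<longrightarrow>
        (LINT x:{a..b}|lborel. \<bar>f x - (LINT y:{a..b}|lborel. f y) / (b - a)\<bar>) / (b - a) \<le> M)"

definition is_monic_OP :: "(real \<Rightarrow> real) \<Rightarrow> nat \<Rightarrow> complex poly \<Rightarrow> bool" where
  "is_monic_OP w n p \<longleftrightarrow> degree p = n \<and> lead_coeff p = 1 \<and>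
     (\<forall>q :: complex poly. degree q < n \<longrightarrow>
        (LINT t:{0..2*pi}|lborel. poly p (cis t) * cnj (poly q (cis t)) * complex_of_real (w t)) = 0)"

definition rev_star :: "nat \<Rightarrow> complex poly \<Rightarrow> complex poly" where
  "rev_star n p = (\<Sum>k\<le>n. monom (cnj (coeff p (n - k))) k)"

end

theory Submission
  imports Defs
begin

text \<open>Orthogonality of \<open>\<Phi>\<close> to all polynomials of degree \<open>< n\<close> in \<open>L\<^sup>2(w d\<theta>)\<close> says exactly
  that \<open>P[1,n] (w \<Phi>*) = 0\<close>, because \<open>\<Phi>* = e\<^sup>i\<^sup>n\<^sup>\<theta> conj \<Phi>\<close> on the circle. Hence
  \<open>w P[1,n] \<Phi>* = C\<^sub>1 \<Phi>*\<close> and \<open>w\<^sup>-\<^sup>1 P[1,n] \<Phi>* = - C~\<^sub>1 (w \<Phi>*)\<close>. The definition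
  \<open>g C\<^sub>k = C\<^sub>k\<^sub>+\<^sub>1 + C\<^sub>k g\<close> of the iterated commutators is a Pascal recurrence, so moving a
  power of \<open>w\<^sup>\<plusminus>\<^sup>1\<close> through \<open>C\<^sub>1\<close> produces the binomial coefficients.\<close>

lemma binomial_expansion_pascal:
  fixes x :: "'a::comm_ring_1"
  assumes pascal: "\<And>k i. x * F k i = F (Suc k) i + F k (Suc i)"
  shows "x ^ m * F a b = (\<Sum>k\<le>m. of_nat (m choose k) * F (a + k) (b + (m - k)))"
proof (induction m arbitrary: a b)
  case 0 then show ?case by simp
next
  case (Suc m)
  have "x ^ Suc m * F a b = x ^ m * F (Suc a) b + x ^ m * F a (Suc b)"
    by (simp add: pascal algebra_simps flip: mult.assoc)
  also have "\<dots> = (\<Sum>k\<le>m. of_nat (m choose k) * F (a + Suc k) (b + (m - k)))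
        + (\<Sum>k\<le>m. of_nat (m choose k) * F (a + k) (b + (Suc m - k)))"
    by (simp add: Suc.IH Suc_diff_le)
  also have "(\<Sum>k\<le>m. of_nat (m choose k) * F (a + Suc k) (b + (m - k)))
      = (\<Sum>k\<le>Suc m. (if k = 0 then 0 else of_nat (m choose (k - 1))) * F (a + k) (b + (Suc m - k)))"
    by (subst sum.atMost_Suc_shift) simp
  also have "(\<Sum>k\<le>m. of_nat (m choose k) * F (a + k) (b + (Suc m - k)))
      = (\<Sum>k\<le>Suc m. of_nat (m choose k) * F (a + k) (b + (Suc m - k)))"
    by (simp add: binomial_eq_0)
  finally have "x ^ Suc m * F a b = (\<Sum>k\<le>Suc m.
      ((if k = 0 then 0 else of_nat (m choose (k - 1))) + of_nat (m choose k)) * F (a + k) (b + (Suc m - k)))"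
    by (simp only: sum.distrib[symmetric] distrib_right)
  also have "\<dots> = (\<Sum>k\<le>Suc m. of_nat (Suc m choose k) * F (a + k) (b + (Suc m - k)))"
    by (intro sum.cong refl) (auto simp: gr0_conv_Suc)
  finally show ?case .
qed

lemma Cop_power_expansion:
  assumes shift: "\<And>i. mult_op g (h i) = h (Suc i)"
  shows "g t ^ m * Cop g a n (h 0) t = (\<Sum>k\<le>m. of_nat (m choose k) * Cop g (a + k) n (h (m - k)) t)"
proof -
  have "g t * Cop g k n (h i) t = Cop g (Suc k) n (h i) t + Cop g k n (h (Suc i)) t" for k i
    by (simp add: mult_op_def flip: shift)
  from binomial_expansion_pascal[where F = "\<lambda>k i. Cop g k n (h i) t", OF this, of m a 0]
  show ?thesis by simp
qed

lemma rev_star_cis: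
  assumes "degree p = n"
  shows "poly (rev_star n p) (cis t) = cis (real n * t) * cnj (poly p (cis t))"
proof -
  have "poly (rev_star n p) (cis t) = (\<Sum>k\<le>n. cnj (coeff p (n - k)) * cis t ^ k)"
    by (simp add: rev_star_def poly_sum poly_monom)
  also have "\<dots> = (\<Sum>i\<le>n. cnj (coeff p i) * cis t ^ (n - i))"
    by (rule sum.reindex_bij_witness[where i="\<lambda>i. n - i" and j="\<lambda>i. n - i"]) auto
  also have "\<dots> = (\<Sum>i\<le>n. cis (real n * t) * (cnj (coeff p i) * cnj (cis t ^ i)))"
  proof (rule sum.cong)
    fix i assume "i \<in> {..n}"
    then have "cis t ^ (n - i) = cis (real n * t) * cis (- (real i * t))"
      by (subst Complex.DeMoivre) (simp add: cis_mult of_nat_diff algebra_simps)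
    then show "cnj (coeff p i) * cis t ^ (n - i) = cis (real n * t) * (cnj (coeff p i) * cnj (cis t ^ i))"
      by (simp add: Complex.DeMoivre cis_cnj)
  qed simp
  also have "\<dots> = cis (real n * t) * cnj (poly p (cis t))"
    by (simp add: poly_altdef assms sum_distrib_left)
  finally show ?thesis .
qed

lemma fourier_coeff_weighted_rev_star_eq_0:
  assumes Phi: "is_monic_OP w n Phi" and k: "1 \<le> k" "k \<le> int n"
  shows "fourier_coeff (\<lambda>t. complex_of_real (w t) * poly (rev_star n Phi) (cis t)) k = 0"
proof -
  define m where "m = nat (int n - k)"
  have deg: "degree Phi = n" using Phi by (simp add: is_monic_OP_def)
  have m: "m < n" "real m = real n - of_int k" using k by (auto simp: m_def)
  then have "degree (monom (1::complex) m) < n" by (simp add: degree_monom_eq)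
  then have orth: "(LINT t:{0..2*pi}|lborel.
      poly Phi (cis t) * cnj (poly (monom 1 m) (cis t)) * complex_of_real (w t)) = 0"
    using Phi unfolding is_monic_OP_def by blast
  have integrand: "complex_of_real (w t) * poly (rev_star n Phi) (cis t) * cis (- (of_int k * t))
      = cnj (poly Phi (cis t) * cnj (poly (monom 1 m) (cis t)) * complex_of_real (w t))" for t
  proof -
    have "cis (real n * t) * cis (- (of_int k * t)) = cis t ^ m"
      by (subst Complex.DeMoivre) (simp add: cis_mult m algebra_simps)
    then show ?thesis
      by (simp add: rev_star_cis[OF deg] poly_monom mult_ac)
  qed
  have "(LINT t:{0..2*pi}|lborel.
      complex_of_real (w t) * poly (rev_star n Phi) (cis t) * cis (- (of_int k * t)))
     = cnj (LINT t:{0..2*pi}|lborel.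
      poly Phi (cis t) * cnj (poly (monom 1 m) (cis t)) * complex_of_real (w t))"
    unfolding integrand set_lebesgue_integral_def Bochner_Integration.integral_cnj[symmetric]
    by (rule arg_cong[where f="integral\<^sup>L lborel"]) (auto simp: indicator_def fun_eq_iff)
  then show ?thesis using orth by (simp add: fourier_coeff_def)
qed

lemma proj_weighted_rev_star_eq_0:
  assumes "is_monic_OP w n Phi"
  shows "proj 1 (int n) (mult_op (\<lambda>t. complex_of_real (w t)) (\<lambda>t. poly (rev_star n Phi) (cis t))) = (\<lambda>t. 0)"
  using fourier_coeff_weighted_rev_star_eq_0[OF assms] by (simp add: proj_def mult_op_def)

lemma borel_measurable_if_locally_integrable:
  assumes "\<forall>a b. a < b \<longrightarrow> set_integrable lborel {a..b} (w::real\<Rightarrow>real)"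
  shows "w \<in> borel_measurable lborel"
proof (rule borel_measurable_LIMSEQ_real[where u="\<lambda>i x. indicator {- real i - 1..real i + 1} x * w x"])
  fix x :: real
  have "eventually (\<lambda>i. indicator {- real i - 1..real i + 1} x * w x = w x) sequentially"
    unfolding eventually_sequentially
  proof (intro exI allI impI)
    fix i assume "nat \<lceil>\<bar>x\<bar>\<rceil> \<le> i"
    then show "indicator {- real i - 1..real i + 1} x * w x = w x" by (auto simp: indicator_def)
  qed
  then show "(\<lambda>i. indicator {- real i - 1..real i + 1} x * w x) \<longlonglongrightarrow> w x"
    by (rule tendsto_eventually)
next
  fix i :: nat
  have "set_integrable lborel {- real i - 1..real i + 1} w" using assms by auto
  then show "(\<lambda>x. indicator {- real i - 1..real i + 1} x * w x) \<in> borel_measurable lborel"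
    unfolding set_integrable_def by (simp add: borel_measurable_integrable)
qed

lemma proj_cong_AE:
  assumes [measurable]: "f \<in> borel_measurable lborel" "g \<in> borel_measurable lborel"
    and "AE t in lborel. f t = g t"
  shows "proj i j f = proj i j g"
proof -
  have [measurable]: "(\<lambda>t. cis (- (of_int k * t))) \<in> borel_measurable lborel" for k
    using borel_measurable_continuous_onI[of "\<lambda>t. cis (- (of_int k * t))"]
    by (simp add: continuous_on_cis continuous_intros)
  have "fourier_coeff f k = fourier_coeff g k" for k
    unfolding fourier_coeff_def
    by (rule arg_cong[where f="\<lambda>x. x / _"], rule set_lebesgue_integral_cong_AE)
      (use assms(3) in auto)
  then show ?thesis by (simp add: proj_def)
qed

lemma proj_inverse_weight_cancel:
  assumes [measurable]: "w \<in> borel_measurable lborel" "f \<in> borel_measurable lborel"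
    and pos: "AE t in lborel. w t > 0"
  shows "proj i j (mult_op (\<lambda>t. complex_of_real (w t powi -1)) (mult_op (\<lambda>t. complex_of_real (w t)) f))
    = proj i j f"
proof (rule proj_cong_AE)
  show "AE t in lborel. mult_op (\<lambda>t. complex_of_real (w t powi -1)) (mult_op (\<lambda>t. complex_of_real (w t)) f) t = f t"
    using pos by eventually_elim (simp add: mult_op_def power_int_minus field_simps)
  show "mult_op (\<lambda>t. complex_of_real (w t powi -1)) (mult_op (\<lambda>t. complex_of_real (w t)) f) \<in> borel_measurable lborel"
    unfolding mult_op_def by (simp add: power_int_minus) measurable
qed fact

definition powi_weight :: "(real \<Rightarrow> real) \<Rightarrow> int \<Rightarrow> cfun" where
  "powi_weight w k = (\<lambda>t. complex_of_real (w t powi k))"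

lemma mult_op_powi_weight_0: "mult_op (powi_weight w 0) f = f"
  by (simp add: powi_weight_def mult_op_def)

lemma mult_op_powi_weight_add:
  "k + l \<noteq> 0 \<Longrightarrow> mult_op (powi_weight w k) (mult_op (powi_weight w l) f) = mult_op (powi_weight w (k + l)) f"
  by (simp add: powi_weight_def mult_op_def power_int_add fun_eq_iff)

lemma powi_weight_proj_commutator_expansion:
  assumes P_wf: "proj 1 (int n) (mult_op (powi_weight w 1) f) = (\<lambda>t. 0)" and j: "j \<ge> 1"
  shows "mult_op (powi_weight w (int j)) (proj 1 (int n) f) t =
    (\<Sum>l=1..j. of_nat ((j - 1) choose (l - 1)) *
      Cop (powi_weight w 1) l n (mult_op (powi_weight w (int j - int l)) f) t)"
proof -
  let ?W = "powi_weight w"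
  have shift: "mult_op (?W 1) (mult_op (?W (int i)) f) = mult_op (?W (int (Suc i))) f" for i
    using mult_op_powi_weight_add[of 1 "int i"] by (simp add: add_ac)
  have C1: "Cop (?W 1) 1 n f t = ?W 1 t * proj 1 (int n) f t"
    using P_wf by (simp add: mult_op_def)
  obtain i where i: "j = Suc i" using j by (cases j) auto
  have "mult_op (?W (int j)) (proj 1 (int n) f) t = ?W 1 t ^ (j - 1) * Cop (?W 1) 1 n f t"
    unfolding C1 unfolding mult_op_def powi_weight_def power_int_of_nat by (simp add: i)
  also have "\<dots> = (\<Sum>k\<le>j - 1. of_nat ((j - 1) choose k)
      * Cop (?W 1) (1 + k) n (mult_op (?W (int (j - 1 - k))) f) t)"
    using Cop_power_expansion[where h = "\<lambda>i. mult_op (?W (int i)) f", OF shift, of t "j - 1" 1 n]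
    by (simp only: of_nat_0 mult_op_powi_weight_0)
  also have "\<dots> = (\<Sum>l=1..j. of_nat ((j - 1) choose (l - 1)) *
      Cop (?W 1) l n (mult_op (?W (int j - int l)) f) t)"
    by (rule sum.reindex_bij_witness[where i = "\<lambda>l. l - 1" and j = Suc]) (auto simp: i of_nat_diff)
  finally show ?thesis .
qed

lemma inverse_powi_weight_proj_commutator_expansion:
  assumes [measurable]: "w \<in> borel_measurable lborel" "f \<in> borel_measurable lborel"
    and pos: "AE t in lborel. w t > 0"
    and P_wf: "proj 1 (int n) (mult_op (powi_weight w 1) f) = (\<lambda>t. 0)"
  shows "mult_op (powi_weight w (- int j)) (proj 1 (int n) f) t =
    - (\<Sum>l=0..j. of_nat (j choose l) *
      Cop (powi_weight w (-1)) (l + 1) n (mult_op (powi_weight w (- (int j - int l))) (mult_op (powi_weight w 1) f)) t)"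
proof -
  let ?W = "powi_weight w"
  have shift: "mult_op (?W (-1)) (mult_op (?W (- int i)) g) = mult_op (?W (- int (Suc i))) g" for i g
    using mult_op_powi_weight_add[of "-1" "- int i"] by (simp add: add_ac)
  have C1: "Cop (?W (-1)) 1 n (mult_op (?W 1) f) t = - proj 1 (int n) f t"
    using P_wf proj_inverse_weight_cancel[of w f 1 "int n"] pos
    by (simp add: powi_weight_def mult_op_def)
  have "mult_op (?W (- int j)) (proj 1 (int n) f) t = - (?W (-1) t ^ j * Cop (?W (-1)) 1 n (mult_op (?W 1) f) t)"
    unfolding C1 by (simp add: powi_weight_def mult_op_def power_int_minus power_inverse)
  also have "?W (-1) t ^ j * Cop (?W (-1)) 1 n (mult_op (?W 1) f) t = (\<Sum>l\<le>j. of_nat (j choose l)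
      * Cop (?W (-1)) (1 + l) n (mult_op (?W (- int (j - l))) (mult_op (?W 1) f)) t)"
    using Cop_power_expansion[where h = "\<lambda>i. mult_op (?W (- int i)) (mult_op (?W 1) f)", OF shift, of t j 1 n]
    by (simp only: of_nat_0 minus_zero mult_op_powi_weight_0)
  also have "\<dots> = (\<Sum>l=0..j. of_nat (j choose l) *
      Cop (?W (-1)) (l + 1) n (mult_op (?W (- (int j - int l))) (mult_op (?W 1) f)) t)"
    by (intro sum.cong) (auto simp: of_nat_diff)
  finally show ?thesis .
qed

text \<open>Of the hypotheses only orthogonality, measurability of \<open>w\<close> (from \<open>w \<in> BMO\<close>) and
  \<open>w > 0\<close> a.e. are needed: the identities are algebraic, the BMO conditions only make the
  commutators bounded operators.\<close>

theorem lemma2p3: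
  fixes w :: "real \<Rightarrow> real" and n :: nat and Phi :: "complex poly"
  assumes periodic: "\<forall>x. w (x + 2 * pi) = w x"
    and integrable: "set_integrable lborel {0..2*pi} w"
    and pos: "AE x in lborel. w x > 0"
    and bmo: "bmo_T w" and bmo_inv: "bmo_T (\<lambda>x. inverse (w x))"
    and n: "n \<ge> 1"
    and Phi: "is_monic_OP w n Phi"
  defines "Phis \<equiv> (\<lambda>t. poly (rev_star n Phi) (cis t))"
    and "W \<equiv> (\<lambda>(k::int) t. complex_of_real (w t powi k))"
  shows "\<forall>j::nat. j \<ge> 1 \<longrightarrow>
      (AE t in lborel. mult_op (W (int j)) (proj 1 (int n) Phis) t =
          (\<Sum>l=1..j. of_nat ((j - 1) choose (l - 1)) *
              Cop (W 1) l n (mult_op (W (int j - int l)) Phis) t))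
    \<and> (AE t in lborel. mult_op (W (- int j)) (proj 1 (int n) Phis) t =
          - (\<Sum>l=0..j. of_nat (j choose l) *
              Cop (W (-1)) (l + 1) n (mult_op (W (- (int j - int l))) (mult_op (W 1) Phis)) t))"
proof -
  have W: "W = powi_weight w" by (simp add: W_def powi_weight_def fun_eq_iff)
  have "w \<in> borel_measurable lborel"
    using bmo borel_measurable_if_locally_integrable unfolding bmo_T_def by blast
  moreover have "Phis \<in> borel_measurable lborel"
    using borel_measurable_continuous_onI[of Phis]
    unfolding Phis_def by (simp add: continuous_on_cis continuous_on_poly continuous_intros)
  moreover have "proj 1 (int n) (mult_op (powi_weight w 1) Phis) = (\<lambda>t. 0)"
    unfolding powi_weight_def Phis_def using proj_weighted_rev_star_eq_0[OF Phi] by simp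
  ultimately show ?thesis unfolding W
    using powi_weight_proj_commutator_expansion inverse_powi_weight_proj_commutator_expansion pos
    by (intro allI impI conjI AE_I2) blast+
qed

end
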